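(* Let $S$ be a compact, metrizable, separable space, let $A$ be the generator of a Feller semigroup on $C(S)$, and let $R_\lambda=(\lambda-A)^{-1}$, $\lambda>0$, be its resolvent. Suppose $(0,\infty)\ni\lambda\mapsto \ell_\lambda\in C(S)$ is locally bounded and satisfies $$(\lambda-\mu)R_\lambda \ell_\mu=\ell_\mu-\ell_\lambda,\qquad \lambda,\mu>0.$$ Then $\lambda\mapsto\ell_\lambda$ is infinitely differentiable (as a $C(S)$-valued map) and $$\ell_\lambda^{(n)}=(-1)^n n!\,(R_\lambda)^n\ell_\lambda,\qquad n\ge 1,\ \lambda>0.$$
   Context: $C(S)$ is the Banach space of real continuous functions on $S$ with the supremum norm. A Feller semigroup is a strongly continuous semigroup of positive contraction operators on $C(S)$ with $T(0)=I$; it need not be conservative (i.e. $T(t)1_S=1_S$ is not required). Its generator is $Af=\lim_{t\to0}t^{-1}(T(t)f-f)$ on the set of $f$ for which the limit exists in norm; the resolvent satisfies $\|\lambda R_\lambda\|\le 1$. *)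

theory Defs
  imports "HOL-Analysis.Analysis"
begin

text \<open>C(S) is modelled by the Banach space ('a, real) bcontfun of bounded continuous
  real functions on the type 'a; for compact 'a every continuous function is bounded,
  so this is exactly C(S) with the supremum norm.\<close>

type_synonym 'a CS = "('a, real) bcontfun"

definition positive_op :: "('a::topological_space CS \<Rightarrow>\<^sub>L 'a CS) \<Rightarrow> bool" where
  "positive_op P \<longleftrightarrow>
     (\<forall>f. (\<forall>x. 0 \<le> apply_bcontfun f x) \<longrightarrow> (\<forall>x. 0 \<le> apply_bcontfun (blinfun_apply P f) x))"

text \<open>Feller semigroup: strongly continuous semigroup of positive contractions with T(0) = I
  (not necessarily conservative).\<close>
definition feller_semigroup :: "(real \<Rightarrow> ('a::topological_space CS \<Rightarrow>\<^sub>L 'a CS)) \<Rightarrow> bool" where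
  "feller_semigroup T \<longleftrightarrow>
     T 0 = id_blinfun \<and>
     (\<forall>s\<ge>0. \<forall>t\<ge>0. T (s + t) = T s o\<^sub>L T t) \<and>
     (\<forall>t\<ge>0. positive_op (T t)) \<and>
     (\<forall>t\<ge>0. norm (T t) \<le> 1) \<and>
     (\<forall>f. continuous_on {0..} (\<lambda>t. blinfun_apply (T t) f))"

definition gen_dom :: "(real \<Rightarrow> ('a::topological_space CS \<Rightarrow>\<^sub>L 'a CS)) \<Rightarrow> 'a CS set" where
  "gen_dom T = {f. \<exists>g. ((\<lambda>t. (1 / t) *\<^sub>R (blinfun_apply (T t) f - f)) \<longlongrightarrow> g) (at_right 0)}"

definition generator :: "(real \<Rightarrow> ('a::topological_space CS \<Rightarrow>\<^sub>L 'a CS)) \<Rightarrow> 'a CS \<Rightarrow> 'a CS" where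
  "generator T f = Lim (at_right 0) (\<lambda>t. (1 / t) *\<^sub>R (blinfun_apply (T t) f - f))"

definition resolvent :: "(real \<Rightarrow> ('a::topological_space CS \<Rightarrow>\<^sub>L 'a CS)) \<Rightarrow> real \<Rightarrow> 'a CS \<Rightarrow> 'a CS" where
  "resolvent T lam g = (THE f. f \<in> gen_dom T \<and> lam *\<^sub>R f - generator T f = g)"

end

theory Submission
  imports Defs
begin

text \<open>The generator A of a contraction semigroup is dissipative,
  \<open>\<lambda> \<parallel>f\<parallel> \<le> \<parallel>\<lambda> f - A f\<parallel>\<close>, and \<open>\<lambda> - A\<close> is onto: if h is the fixed point of the
  contraction \<open>h \<mapsto> g + exp (-\<lambda>) T(1) h\<close>, then \<open>f = \<integral>\<^sub>0\<^sup>1 exp (-\<lambda> u) T(u) h du\<close>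
  satisfies \<open>\<lambda> f - A f = h - exp (-\<lambda>) T(1) h = g\<close>. Hence \<open>R\<^sub>\<lambda>\<close> is a bounded
  operator of norm at most \<open>1/\<lambda>\<close> obeying the resolvent identity, so \<open>\<lambda> \<mapsto> R\<^sub>\<lambda>\<close>
  is norm differentiable with derivative \<open>-R\<^sub>\<lambda>\<^sup>2\<close>. Read with \<open>\<lambda>\<close> and \<open>\<mu>\<close>
  exchanged, the hypothesis says \<open>\<ell>\<^sub>\<mu> - \<ell>\<^sub>\<lambda> = (\<lambda> - \<mu>) R\<^sub>\<mu> \<ell>\<^sub>\<lambda>\<close>, so
  \<open>\<ell>' = -R\<^sub>\<lambda> \<ell>\<^sub>\<lambda>\<close>, and by the product rule and induction
  \<open>(R\<^sub>\<lambda>\<^sup>n \<ell>\<^sub>\<lambda>)' = -(n+1) R\<^sub>\<lambda>\<^sup>n\<^sup>+\<^sup>1 \<ell>\<^sub>\<lambda>\<close>.\<close>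

instance bcontfun :: (metric_space, banach) banach ..

lemma has_vector_derivative_iff_slope_tendsto:
  fixes f :: "real \<Rightarrow> 'b::real_normed_vector"
  shows "(f has_vector_derivative f') (at x within S) \<longleftrightarrow>
    ((\<lambda>y. (1 / (y - x)) *\<^sub>R (f y - f x)) \<longlongrightarrow> f') (at x within S)"
proof -
  have "norm ((f y - f x) - (y - x) *\<^sub>R f') / norm (y - x)
      = norm ((1 / (y - x)) *\<^sub>R (f y - f x) - f')" if "y \<noteq> x" for y
  proof -
    have "(1 / (y - x)) *\<^sub>R (f y - f x) - f' = (1 / (y - x)) *\<^sub>R ((f y - f x) - (y - x) *\<^sub>R f')"
      using that by (simp add: scaleR_right_diff_distrib)
    then show ?thesis by (simp add: divide_simps)
  qed
  then have "eventually (\<lambda>y. norm ((f y - f x) - (y - x) *\<^sub>R f') / norm (y - x)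
      = norm ((1 / (y - x)) *\<^sub>R (f y - f x) - f')) (at x within S)"
    unfolding eventually_at_filter by (auto intro: always_eventually)
  then have "((\<lambda>y. norm ((f y - f x) - (y - x) *\<^sub>R f') / norm (y - x)) \<longlongrightarrow> 0) (at x within S)
      \<longleftrightarrow> ((\<lambda>y. norm ((1 / (y - x)) *\<^sub>R (f y - f x) - f')) \<longlongrightarrow> 0) (at x within S)"
    by (rule tendsto_cong)
  then show ?thesis
    unfolding has_vector_derivative_def has_derivative_iff_norm
    by (simp add: bounded_linear_scaleR_left tendsto_norm_zero_iff LIM_zero_iff)
qed

lemma has_vector_derivative_imp_right_slope_tendsto:
  fixes f :: "real \<Rightarrow> 'b::real_normed_vector"
  assumes "(f has_vector_derivative f') (at x within {a..b})" "a \<le> x" "x < b"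
  shows "((\<lambda>h. (1 / h) *\<^sub>R (f (x + h) - f x)) \<longlongrightarrow> f') (at_right 0)"
proof -
  have "eventually (\<lambda>h. x + h \<in> {a..b} \<and> x + h \<noteq> x) (at_right (0::real))"
    by (rule eventually_at_rightI[where b="b - x"]) (use assms in auto)
  moreover have "((\<lambda>h. x + h) \<longlongrightarrow> x) (at_right (0::real))"
    by (intro tendsto_eq_intros) auto
  ultimately have "filterlim (\<lambda>h. x + h) (at x within {a..b}) (at_right 0)"
    unfolding filterlim_at by simp
  from filterlim_compose[OF assms(1)[unfolded has_vector_derivative_iff_slope_tendsto] this]
  show ?thesis by simp
qed

lemma has_vector_derivative_of_slope_factorization:
  fixes f :: "real \<Rightarrow> 'b::real_normed_vector"
  assumes "eventually (\<lambda>mu. f mu - f lam = (mu - lam) *\<^sub>R g mu) (at lam)"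
    and "(g \<longlongrightarrow> g lam) (at lam)"
  shows "(f has_vector_derivative g lam) (at lam)"
proof -
  have "eventually (\<lambda>mu. g mu = (1 / (mu - lam)) *\<^sub>R (f mu - f lam)) (at lam)"
    using eventually_conj[OF assms(1) eventually_neq_at_within[of lam lam UNIV]]
    by eventually_elim simp
  from tendsto_cong[OF this] assms(2) show ?thesis
    by (simp add: has_vector_derivative_iff_slope_tendsto)
qed

lemma tendsto_exp_difference_quotient: "((\<lambda>h. (exp ((c :: real) * h) - 1) / h) \<longlongrightarrow> c) (at_right 0)"
proof -
  have "((\<lambda>h. exp (c * h)) has_vector_derivative c) (at 0 within {0..1})"
    unfolding has_real_derivative_iff_has_vector_derivative[symmetric]
    by (auto intro!: derivative_eq_intros)
  from has_vector_derivative_imp_right_slope_tendsto[OF this] show ?thesis by simp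
qed

locale feller =
  fixes T :: "real \<Rightarrow> ('a::metric_space CS \<Rightarrow>\<^sub>L 'a CS)"
  assumes feller_semigroup: "feller_semigroup T"
begin

lemma semigroup_zero: "T 0 = id_blinfun"
  using feller_semigroup unfolding feller_semigroup_def by auto

lemma semigroup_add: "s \<ge> 0 \<Longrightarrow> t \<ge> 0 \<Longrightarrow> T (s + t) = T s o\<^sub>L T t"
  using feller_semigroup unfolding feller_semigroup_def by auto

lemma norm_semigroup_le: "t \<ge> 0 \<Longrightarrow> norm (T t) \<le> 1"
  using feller_semigroup unfolding feller_semigroup_def by auto

lemma continuous_on_orbit: "continuous_on {0..} (\<lambda>t. blinfun_apply (T t) f)"
  using feller_semigroup unfolding feller_semigroup_def by auto

lemma generator_tendsto:
  assumes "f \<in> gen_dom T"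
  shows "((\<lambda>t. (1 / t) *\<^sub>R (blinfun_apply (T t) f - f)) \<longlongrightarrow> generator T f) (at_right 0)"
  using assms tendsto_Lim[OF trivial_limit_at_right_real] unfolding gen_dom_def generator_def
  by blast

lemma generatorI:
  assumes "((\<lambda>t. (1 / t) *\<^sub>R (blinfun_apply (T t) f - f)) \<longlongrightarrow> g) (at_right 0)"
  shows "f \<in> gen_dom T" and "generator T f = g"
proof -
  show "f \<in> gen_dom T" using assms unfolding gen_dom_def by blast
  show "generator T f = g" unfolding generator_def
    using tendsto_Lim[OF trivial_limit_at_right_real assms] .
qed

lemma generator_lincomb:
  assumes "f \<in> gen_dom T" "g \<in> gen_dom T"
  shows "a *\<^sub>R f + b *\<^sub>R g \<in> gen_dom T"
    and "generator T (a *\<^sub>R f + b *\<^sub>R g) = a *\<^sub>R generator T f + b *\<^sub>R generator T g"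
proof -
  have "((\<lambda>t. a *\<^sub>R ((1 / t) *\<^sub>R (blinfun_apply (T t) f - f))
      + b *\<^sub>R ((1 / t) *\<^sub>R (blinfun_apply (T t) g - g)))
     \<longlongrightarrow> a *\<^sub>R generator T f + b *\<^sub>R generator T g) (at_right 0)"
    by (intro tendsto_intros generator_tendsto assms)
  moreover have "a *\<^sub>R ((1 / t) *\<^sub>R (blinfun_apply (T t) f - f))
      + b *\<^sub>R ((1 / t) *\<^sub>R (blinfun_apply (T t) g - g))
     = (1 / t) *\<^sub>R (blinfun_apply (T t) (a *\<^sub>R f + b *\<^sub>R g) - (a *\<^sub>R f + b *\<^sub>R g))" for t
    by (simp add: blinfun.add_right blinfun.scaleR_right algebra_simps)
  ultimately show "a *\<^sub>R f + b *\<^sub>R g \<in> gen_dom T"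
    and "generator T (a *\<^sub>R f + b *\<^sub>R g) = a *\<^sub>R generator T f + b *\<^sub>R generator T g"
    using generatorI by simp_all
qed

lemma generator_dissipative:
  assumes "f \<in> gen_dom T" and lam: "lam > 0"
  shows "lam * norm f \<le> norm (lam *\<^sub>R f - generator T f)"
proof -
  let ?q = "\<lambda>t. (1 / t) *\<^sub>R (blinfun_apply (T t) f - f)"
  have lim: "((\<lambda>t. norm (lam *\<^sub>R f - ?q t)) \<longlongrightarrow> norm (lam *\<^sub>R f - generator T f)) (at_right 0)"
    by (intro tendsto_intros generator_tendsto assms)
  have "eventually (\<lambda>t. lam * norm f \<le> norm (lam *\<^sub>R f - ?q t)) (at_right 0)"
  proof (rule eventually_at_rightI[where b=1])
    fix t :: real assume "t \<in> {0<..<1}"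
    then have t: "t > 0" by auto
    have "norm (blinfun_apply (T t) f) \<le> norm (T t) * norm f"
      by (rule norm_blinfun)
    also have "\<dots> \<le> norm f"
      using norm_semigroup_le[of t] t by (simp add: mult_left_le_one_le)
    finally have contraction: "norm (blinfun_apply (T t) f) \<le> norm f" .
    have "(1 + lam * t) * norm f = norm ((1 + lam * t) *\<^sub>R f)"
      using lam t by simp
    also have "\<dots> \<le> norm (blinfun_apply (T t) f) + norm ((1 + lam * t) *\<^sub>R f - blinfun_apply (T t) f)"
      by (rule norm_triangle_sub)
    also have "(1 + lam * t) *\<^sub>R f - blinfun_apply (T t) f = t *\<^sub>R (lam *\<^sub>R f - ?q t)"
      using t by (simp add: algebra_simps)
    also have "norm (blinfun_apply (T t) f) + norm (t *\<^sub>R (lam *\<^sub>R f - ?q t))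
        \<le> norm f + t * norm (lam *\<^sub>R f - ?q t)"
      using contraction t by simp
    finally have "t * (lam * norm f) \<le> t * norm (lam *\<^sub>R f - ?q t)"
      by (simp add: algebra_simps)
    then show "lam * norm f \<le> norm (lam *\<^sub>R f - ?q t)" using t by simp
  qed simp
  then show ?thesis by (rule tendsto_lowerbound[OF lim _ trivial_limit_at_right_real])
qed

lemma lam_minus_generator_inj:
  assumes lam: "lam > 0" and "f \<in> gen_dom T" "g \<in> gen_dom T"
    and "lam *\<^sub>R f - generator T f = lam *\<^sub>R g - generator T g"
  shows "f = g"
proof -
  have "lam * norm (f - g) \<le> norm (lam *\<^sub>R (f - g) - generator T (f - g))"
    using generator_dissipative[OF generator_lincomb(1)[OF assms(2,3), of 1 "-1"] lam] by simp
  also have "generator T (f - g) = generator T f - generator T g"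
    using generator_lincomb(2)[OF assms(2,3), of 1 "-1"] by simp
  also have "lam *\<^sub>R (f - g) - (generator T f - generator T g) = 0"
    using assms(4) by (simp add: algebra_simps)
  finally show ?thesis using lam by (simp add: mult_le_0_iff)
qed

definition truncated_laplace :: "real \<Rightarrow> 'a CS \<Rightarrow> real \<Rightarrow> 'a CS" where
  "truncated_laplace lam g t = integral {0..t} (\<lambda>u. exp (- lam * u) *\<^sub>R blinfun_apply (T u) g)"

lemma continuous_on_damped_orbit:
  "S \<subseteq> {0..} \<Longrightarrow> continuous_on S (\<lambda>u. exp (- lam * u) *\<^sub>R blinfun_apply (T u) g)"
  by (intro continuous_intros continuous_on_subset[OF continuous_on_orbit])

lemma integrable_damped_orbit:
  "(\<lambda>u. exp (- lam * u) *\<^sub>R blinfun_apply (T u) g) integrable_on {0..t}"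
  by (intro integrable_continuous_interval continuous_on_damped_orbit) auto

lemma has_vector_derivative_truncated_laplace:
  assumes "0 \<le> t" "t \<le> b"
  shows "(truncated_laplace lam g has_vector_derivative exp (- lam * t) *\<^sub>R blinfun_apply (T t) g)
    (at t within {0..b})"
  unfolding truncated_laplace_def
  by (intro integral_has_vector_derivative continuous_on_damped_orbit) (use assms in auto)

lemma semigroup_truncated_laplace:
  assumes h: "0 \<le> h" and t: "0 \<le> t"
  shows "blinfun_apply (T h) (truncated_laplace lam g t)
    = exp (lam * h) *\<^sub>R (truncated_laplace lam g (t + h) - truncated_laplace lam g h)"
proof -
  define \<phi> where "\<phi> u = exp (- lam * u) *\<^sub>R blinfun_apply (T u) g" for u
  have "blinfun_apply (T h) (truncated_laplace lam g t) = integral {0..t} (blinfun_apply (T h) \<circ> \<phi>)"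
    unfolding truncated_laplace_def \<phi>_def
    by (rule integral_linear[OF integrable_damped_orbit blinfun.bounded_linear_right, symmetric])
  also have "\<dots> = integral {0..t} (\<lambda>u. exp (lam * h) *\<^sub>R (\<phi> \<circ> (+) h) u)"
  proof (rule integral_cong)
    fix u :: real assume "u \<in> {0..t}"
    moreover have "exp (lam * h) * exp (- lam * (h + u)) = exp (- lam * u)"
      by (subst exp_add[symmetric]) (simp add: algebra_simps)
    ultimately show "(blinfun_apply (T h) \<circ> \<phi>) u = exp (lam * h) *\<^sub>R (\<phi> \<circ> (+) h) u"
      unfolding \<phi>_def using semigroup_add[of h u] h by (simp add: blinfun.scaleR_right)
  qed
  also have "\<dots> = exp (lam * h) *\<^sub>R integral {h..t + h} \<phi>"
    using integral_shift_Icc_real[of 0 t \<phi> h] by (simp add: comp_def add.commute)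
  also have "integral {h..t + h} \<phi> = truncated_laplace lam g (t + h) - truncated_laplace lam g h"
    using Henstock_Kurzweil_Integration.integral_combine[where a=0 and c=h and b="t + h" and f=\<phi>]
      integrable_damped_orbit[of lam g "t + h"] h t
    unfolding truncated_laplace_def \<phi>_def by (simp add: eq_diff_eq add.commute)
  finally show ?thesis .
qed

lemma truncated_laplace_generator:
  fixes lam :: real and g :: "'a CS"
  assumes t: "0 \<le> t"
  defines "G \<equiv> truncated_laplace lam g"
  shows "G t \<in> gen_dom T"
    and "generator T (G t) = lam *\<^sub>R G t + exp (- lam * t) *\<^sub>R blinfun_apply (T t) g - g"
proof -
  let ?Qt = "\<lambda>h. (1 / h) *\<^sub>R (G (t + h) - G t)" and ?Q0 = "\<lambda>h. (1 / h) *\<^sub>R (G (0 + h) - G 0)"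
  have slope_t: "(?Qt \<longlongrightarrow> exp (- lam * t) *\<^sub>R blinfun_apply (T t) g) (at_right 0)"
    unfolding G_def
    by (rule has_vector_derivative_imp_right_slope_tendsto[where b="t + 1",
          OF has_vector_derivative_truncated_laplace]) (use t in auto)
  have slope_0: "(?Q0 \<longlongrightarrow> g) (at_right 0)"
    using has_vector_derivative_imp_right_slope_tendsto[where a=0 and b=1,
        OF has_vector_derivative_truncated_laplace[of 0 1 lam g]]
    unfolding G_def by (simp add: semigroup_zero)
  have G0: "G 0 = 0" unfolding G_def truncated_laplace_def by simp
  (* by semigroup_truncated_laplace, the generator quotient of G t is a combination of the
     right difference quotients of G at t and at 0 *)
  have "eventually (\<lambda>h. ((exp (lam * h) - 1) / h) *\<^sub>R (G t + h *\<^sub>R ?Qt h - h *\<^sub>R ?Q0 h) + ?Qt h - ?Q0 h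
      = (1 / h) *\<^sub>R (blinfun_apply (T h) (G t) - G t)) (at_right 0)"
  proof (rule eventually_at_rightI[where b=1])
    fix h :: real assume "h \<in> {0<..<1}"
    then have h: "0 < h" by simp
    have slopes: "h *\<^sub>R ?Qt h = G (t + h) - G t" "h *\<^sub>R ?Q0 h = G h" using h G0 by auto
    have shift: "blinfun_apply (T h) (G t) = exp (lam * h) *\<^sub>R (G (t + h) - G h)"
      unfolding G_def using h t by (simp add: semigroup_truncated_laplace)
    show "((exp (lam * h) - 1) / h) *\<^sub>R (G t + h *\<^sub>R ?Qt h - h *\<^sub>R ?Q0 h) + ?Qt h - ?Q0 h
      = (1 / h) *\<^sub>R (blinfun_apply (T h) (G t) - G t)"
      unfolding shift slopes using G0 by (simp add: algebra_simps divide_inverse scaleR_right_diff_distrib)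
  qed simp
  moreover have "((\<lambda>h. ((exp (lam * h) - 1) / h) *\<^sub>R (G t + h *\<^sub>R ?Qt h - h *\<^sub>R ?Q0 h) + ?Qt h - ?Q0 h)
      \<longlongrightarrow> lam *\<^sub>R (G t + 0 *\<^sub>R (exp (- lam * t) *\<^sub>R blinfun_apply (T t) g) - 0 *\<^sub>R g)
        + exp (- lam * t) *\<^sub>R blinfun_apply (T t) g - g)
      (at_right 0)"
    by (intro tendsto_intros tendsto_exp_difference_quotient slope_t slope_0 tendsto_ident_at)
  ultimately have "((\<lambda>h. (1 / h) *\<^sub>R (blinfun_apply (T h) (G t) - G t))
      \<longlongrightarrow> lam *\<^sub>R G t + exp (- lam * t) *\<^sub>R blinfun_apply (T t) g - g) (at_right 0)"
    by (simp add: tendsto_cong)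
  then show "G t \<in> gen_dom T"
    and "generator T (G t) = lam *\<^sub>R G t + exp (- lam * t) *\<^sub>R blinfun_apply (T t) g - g"
    by (rule generatorI)+
qed

lemma lam_minus_generator_surj:
  assumes lam: "lam > 0"
  shows "\<exists>f\<in>gen_dom T. lam *\<^sub>R f - generator T f = g"
proof -
  let ?c = "exp (- lam)"
  have "\<exists>!h. g + ?c *\<^sub>R blinfun_apply (T 1) h = h"
  proof (rule banach_fix_type)
    show "0 \<le> ?c" "?c < 1" using lam by auto
    show "\<forall>x y. dist (g + ?c *\<^sub>R blinfun_apply (T 1) x) (g + ?c *\<^sub>R blinfun_apply (T 1) y) \<le> ?c * dist x y"
    proof (intro allI)
      fix x y
      have "dist (g + ?c *\<^sub>R blinfun_apply (T 1) x) (g + ?c *\<^sub>R blinfun_apply (T 1) y)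
          = ?c * norm (blinfun_apply (T 1) (x - y))"
        by (simp add: dist_norm blinfun.diff_right scaleR_right_diff_distrib[symmetric])
      also have "\<dots> \<le> ?c * (norm (T 1) * norm (x - y))"
        by (intro mult_left_mono norm_blinfun) auto
      also have "\<dots> \<le> ?c * dist x y"
        using norm_semigroup_le[of 1] by (simp add: dist_norm mult_left_le_one_le)
      finally show "dist (g + ?c *\<^sub>R blinfun_apply (T 1) x) (g + ?c *\<^sub>R blinfun_apply (T 1) y)
          \<le> ?c * dist x y" .
    qed
  qed
  then obtain h where h: "g + ?c *\<^sub>R blinfun_apply (T 1) h = h" by blast
  have "lam *\<^sub>R truncated_laplace lam h 1 - generator T (truncated_laplace lam h 1)
      = h - ?c *\<^sub>R blinfun_apply (T 1) h"
    using truncated_laplace_generator(2)[of 1 lam h] by simp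
  also have "\<dots> = g" using h by (simp add: diff_eq_eq)
  finally have "lam *\<^sub>R truncated_laplace lam h 1 - generator T (truncated_laplace lam h 1) = g" .
  moreover have "truncated_laplace lam h 1 \<in> gen_dom T" by (simp add: truncated_laplace_generator(1))
  ultimately show ?thesis by blast
qed

lemma resolvent_eqI:
  assumes "lam > 0" "f \<in> gen_dom T" "lam *\<^sub>R f - generator T f = g"
  shows "resolvent T lam g = f"
  unfolding resolvent_def by (rule the_equality) (use assms lam_minus_generator_inj in auto)

lemma resolvent_solves:
  assumes "lam > 0"
  shows "resolvent T lam g \<in> gen_dom T"
    and "lam *\<^sub>R resolvent T lam g - generator T (resolvent T lam g) = g"
proof -
  obtain f where "f \<in> gen_dom T" "lam *\<^sub>R f - generator T f = g"
    using lam_minus_generator_surj[OF assms] by blast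
  with resolvent_eqI[OF assms this] show "resolvent T lam g \<in> gen_dom T"
    and "lam *\<^sub>R resolvent T lam g - generator T (resolvent T lam g) = g" by simp_all
qed

lemma resolvent_lincomb:
  assumes lam: "lam > 0"
  shows "resolvent T lam (a *\<^sub>R g + b *\<^sub>R h) = a *\<^sub>R resolvent T lam g + b *\<^sub>R resolvent T lam h"
proof (rule resolvent_eqI[OF lam])
  let ?f = "a *\<^sub>R resolvent T lam g + b *\<^sub>R resolvent T lam h"
  note lincomb = generator_lincomb[OF resolvent_solves(1)[OF lam] resolvent_solves(1)[OF lam], of a g b h]
  show "?f \<in> gen_dom T" by (rule lincomb(1))
  have "lam *\<^sub>R ?f - generator T ?f
    = a *\<^sub>R (lam *\<^sub>R resolvent T lam g - generator T (resolvent T lam g))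
      + b *\<^sub>R (lam *\<^sub>R resolvent T lam h - generator T (resolvent T lam h))"
    unfolding lincomb(2) by (simp add: algebra_simps)
  also have "\<dots> = a *\<^sub>R g + b *\<^sub>R h" by (simp add: resolvent_solves(2)[OF lam])
  finally show "lam *\<^sub>R ?f - generator T ?f = a *\<^sub>R g + b *\<^sub>R h" .
qed

lemma norm_resolvent_le:
  assumes lam: "lam > 0"
  shows "norm (resolvent T lam g) \<le> norm g / lam"
proof -
  have "lam * norm (resolvent T lam g) \<le> norm g"
    using generator_dissipative[OF resolvent_solves(1)[OF lam] lam] unfolding resolvent_solves(2)[OF lam] .
  then show ?thesis using lam by (simp add: field_simps)
qed

lemma bounded_linear_resolvent:
  assumes lam: "lam > 0"
  shows "bounded_linear (resolvent T lam)"
proof (rule bounded_linear_intro)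
  show "resolvent T lam (x + y) = resolvent T lam x + resolvent T lam y" for x y
    using resolvent_lincomb[OF lam, of 1 x 1 y] by simp
  show "resolvent T lam (r *\<^sub>R x) = r *\<^sub>R resolvent T lam x" for r x
    using resolvent_lincomb[OF lam, of r x 0 x] by simp
  show "norm (resolvent T lam x) \<le> norm x * (1 / lam)" for x
    using norm_resolvent_le[OF lam, of x] by simp
qed

lemma resolvent_identity:
  assumes lam: "lam > 0" and mu: "mu > 0"
  shows "resolvent T mu g - resolvent T lam g = (lam - mu) *\<^sub>R resolvent T lam (resolvent T mu g)"
proof -
  have "resolvent T lam (1 *\<^sub>R g + (lam - mu) *\<^sub>R resolvent T mu g) = resolvent T mu g"
    by (rule resolvent_eqI[OF lam resolvent_solves(1)[OF mu]])
       (use resolvent_solves(2)[OF mu, of g] in \<open>simp add: algebra_simps\<close>)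
  then show ?thesis
    using resolvent_lincomb[OF lam, of 1 g "lam - mu" "resolvent T mu g"] by (simp add: algebra_simps)
qed

definition resolvent_op :: "real \<Rightarrow> ('a CS \<Rightarrow>\<^sub>L 'a CS)" where
  "resolvent_op lam = Blinfun (resolvent T lam)"

lemma blinfun_apply_resolvent_op: "lam > 0 \<Longrightarrow> blinfun_apply (resolvent_op lam) = resolvent T lam"
  unfolding resolvent_op_def by (rule bounded_linear_Blinfun_apply[OF bounded_linear_resolvent])

lemma norm_resolvent_op_le: "lam > 0 \<Longrightarrow> norm (resolvent_op lam) \<le> 1 / lam"
  by (rule norm_blinfun_bound) (simp_all add: blinfun_apply_resolvent_op norm_resolvent_le)

lemma resolvent_op_diff:
  assumes "lam > 0" "mu > 0"
  shows "resolvent_op mu - resolvent_op lam = (mu - lam) *\<^sub>R - (resolvent_op lam o\<^sub>L resolvent_op mu)"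
  by (rule blinfun_eqI)
     (simp add: blinfun.diff_left blinfun.scaleR_left blinfun.minus_left blinfun_apply_resolvent_op
       assms resolvent_identity algebra_simps)

lemma tendsto_resolvent_op:
  assumes lam: "lam > 0"
  shows "(resolvent_op \<longlongrightarrow> resolvent_op lam) (at lam)"
proof -
  have "eventually (\<lambda>mu. mu > lam / 2) (at lam)"
    using lam by (intro order_tendstoD(1)[OF tendsto_ident_at]) auto
  then have "eventually (\<lambda>mu. norm (resolvent_op mu - resolvent_op lam) \<le> \<bar>mu - lam\<bar> * (2 / lam) * (1 / lam))
      (at lam)"
  proof eventually_elim
    case (elim mu)
    then have mu: "mu > 0" "1 / mu \<le> 2 / lam" using lam by (auto simp: field_simps)
    have "norm (resolvent_op mu - resolvent_op lam) = \<bar>mu - lam\<bar> * norm (resolvent_op lam o\<^sub>L resolvent_op mu)"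
      unfolding resolvent_op_diff[OF lam mu(1)] by simp
    also have "\<dots> \<le> \<bar>mu - lam\<bar> * (norm (resolvent_op lam) * norm (resolvent_op mu))"
      by (intro mult_left_mono norm_blinfun_compose) auto
    also have "\<dots> \<le> \<bar>mu - lam\<bar> * ((1 / lam) * (2 / lam))"
      using lam norm_resolvent_op_le[OF lam] norm_resolvent_op_le[OF mu(1)] mu(2)
      by (intro mult_left_mono mult_mono) auto
    finally show ?case by (simp add: algebra_simps)
  qed
  moreover have "((\<lambda>mu. \<bar>mu - lam\<bar> * (2 / lam) * (1 / lam)) \<longlongrightarrow> 0) (at lam)"
    by (intro tendsto_eq_intros) auto
  ultimately have "((\<lambda>mu. resolvent_op mu - resolvent_op lam) \<longlongrightarrow> 0) (at lam)"
    by (rule Lim_null_comparison)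
  then show ?thesis by (simp add: LIM_zero_iff)
qed

lemma has_vector_derivative_resolvent_op:
  assumes lam: "lam > 0"
  shows "(resolvent_op has_vector_derivative - (resolvent_op lam o\<^sub>L resolvent_op lam)) (at lam)"
proof (rule has_vector_derivative_of_slope_factorization[where g="\<lambda>mu. - (resolvent_op lam o\<^sub>L resolvent_op mu)"])
  show "eventually (\<lambda>mu. resolvent_op mu - resolvent_op lam
      = (mu - lam) *\<^sub>R - (resolvent_op lam o\<^sub>L resolvent_op mu)) (at lam)"
    using order_tendstoD(1)[OF tendsto_ident_at lam] by eventually_elim (rule resolvent_op_diff[OF lam])
  show "((\<lambda>mu. - (resolvent_op lam o\<^sub>L resolvent_op mu)) \<longlongrightarrow> - (resolvent_op lam o\<^sub>L resolvent_op lam)) (at lam)"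
    by (intro tendsto_minus bounded_bilinear.tendsto[OF bounded_bilinear_blinfun_compose]
        tendsto_const tendsto_resolvent_op lam)
qed

lemma has_vector_derivative_resolvent_family:
  assumes l: "\<forall>lam>0. \<forall>mu>0. (lam - mu) *\<^sub>R resolvent T lam (l mu) = l mu - l lam"
    and lam: "lam > 0"
  shows "(l has_vector_derivative - resolvent T lam (l lam)) (at lam)"
proof -
  have "(l has_vector_derivative - blinfun_apply (resolvent_op lam) (l lam)) (at lam)"
  proof (rule has_vector_derivative_of_slope_factorization[where g="\<lambda>mu. - blinfun_apply (resolvent_op mu) (l lam)"])
    show "eventually (\<lambda>mu. l mu - l lam = (mu - lam) *\<^sub>R - blinfun_apply (resolvent_op mu) (l lam)) (at lam)"
      using order_tendstoD(1)[OF tendsto_ident_at lam]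
    proof eventually_elim
      case (elim mu)
      with l lam have "(mu - lam) *\<^sub>R resolvent T mu (l lam) = l lam - l mu" by blast
      then show ?case using blinfun_apply_resolvent_op[OF elim] by simp
    qed
    show "((\<lambda>mu. - blinfun_apply (resolvent_op mu) (l lam)) \<longlongrightarrow> - blinfun_apply (resolvent_op lam) (l lam)) (at lam)"
      by (intro tendsto_minus bounded_bilinear.tendsto[OF bounded_bilinear_blinfun_apply]
          tendsto_const tendsto_resolvent_op lam)
  qed
  then show ?thesis using blinfun_apply_resolvent_op[OF lam] by simp
qed

lemma has_vector_derivative_resolvent_power_family:
  assumes l: "\<forall>lam>0. \<forall>mu>0. (lam - mu) *\<^sub>R resolvent T lam (l mu) = l mu - l lam"
    and lam: "lam > 0"
  shows "((\<lambda>mu. (blinfun_apply (resolvent_op mu) ^^ n) (l mu)) has_vector_derivative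
    - (real n + 1) *\<^sub>R (blinfun_apply (resolvent_op lam) ^^ Suc n) (l lam)) (at lam)"
  using lam
proof (induction n arbitrary: lam)
  case 0
  then show ?case
    using has_vector_derivative_resolvent_family[OF l] by (simp add: blinfun_apply_resolvent_op)
next
  case (Suc n)
  let ?P = "\<lambda>n mu. (blinfun_apply (resolvent_op mu) ^^ n) (l mu)"
  have "((\<lambda>mu. blinfun_apply (resolvent_op mu) (?P n mu)) has_vector_derivative
      blinfun_apply (resolvent_op lam) (- (real n + 1) *\<^sub>R ?P (Suc n) lam)
      + blinfun_apply (- (resolvent_op lam o\<^sub>L resolvent_op lam)) (?P n lam)) (at lam)"
    by (rule bounded_bilinear.has_vector_derivative[OF bounded_bilinear_blinfun_apply
          has_vector_derivative_resolvent_op[OF Suc.prems] Suc.IH[OF Suc.prems]])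
  moreover have "blinfun_apply (resolvent_op lam) (- (real n + 1) *\<^sub>R ?P (Suc n) lam)
      + blinfun_apply (- (resolvent_op lam o\<^sub>L resolvent_op lam)) (?P n lam)
    = - (real (Suc n) + 1) *\<^sub>R ?P (Suc (Suc n)) lam"
    by (simp add: blinfun.scaleR_right blinfun.minus_left blinfun.minus_right blinfun.diff_right
        blinfun.add_right algebra_simps scaleR_2)
  ultimately show ?case by simp
qed

end

theorem proposition1:
  fixes T :: "real \<Rightarrow> ('a::metric_space CS \<Rightarrow>\<^sub>L 'a CS)"
    and l :: "real \<Rightarrow> 'a CS"
  assumes "compact (UNIV :: 'a set)"
    and "feller_semigroup T"
    and "\<forall>lam>0. \<exists>e>0. \<exists>M. \<forall>mu. mu > 0 \<and> \<bar>mu - lam\<bar> < e \<longrightarrow> norm (l mu) \<le> M"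
    and "\<forall>lam>0. \<forall>mu>0. (lam - mu) *\<^sub>R resolvent T lam (l mu) = l mu - l lam"
  shows "\<exists>D :: nat \<Rightarrow> real \<Rightarrow> 'a CS.
           (\<forall>lam>0. D 0 lam = l lam) \<and>
           (\<forall>n. \<forall>lam>0. (D n has_vector_derivative D (Suc n) lam) (at lam)) \<and>
           (\<forall>n\<ge>1. \<forall>lam>0. D n lam = ((-1) ^ n * fact n) *\<^sub>R ((resolvent T lam ^^ n) (l lam)))"
proof -
  interpret feller T by (rule feller.intro) (rule assms(2))
  define D where "D n mu = ((-1) ^ n * fact n) *\<^sub>R (blinfun_apply (resolvent_op mu) ^^ n) (l mu)" for n mu
  show ?thesis
  proof (intro exI[of _ D] conjI allI impI)
    fix lam :: real assume "lam > 0"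
    show "D 0 lam = l lam" unfolding D_def by simp
  next
    fix n and lam :: real assume lam: "lam > 0"
    have "(D n has_vector_derivative ((-1) ^ n * fact n) *\<^sub>R
        (- (real n + 1) *\<^sub>R (blinfun_apply (resolvent_op lam) ^^ Suc n) (l lam))) (at lam)"
      unfolding D_def
      by (rule bounded_linear.has_vector_derivative[OF bounded_linear_scaleR_right
            has_vector_derivative_resolvent_power_family[OF assms(4) lam]])
    then show "(D n has_vector_derivative D (Suc n) lam) (at lam)"
      unfolding D_def by (simp add: algebra_simps)
  next
    fix n and lam :: real assume "lam > 0"
    then show "D n lam = ((-1) ^ n * fact n) *\<^sub>R (resolvent T lam ^^ n) (l lam)"
      unfolding D_def by (simp add: blinfun_apply_resolvent_op)
  qed
qed

end
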